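(* Let $\Psi:\mathbb{R}\to\mathrm{Sp}(\mathbb{R}^{2n})$ be smooth with $\Psi(0)=\mathbb{1}$, $\Psi(t+T)=\Psi(t)\Psi(T)$ and $\Psi(-t)=I_{\mathbb{R}^{2n}}\Psi(t)I_{\mathbb{R}^{2n}}$ for all $t$. Then $\dim\ker(\Psi(T)-\mathbb{1}_{\mathbb{R}^{2n}})=0$ if and only if both $\Psi(T/2)\mathbb{R}^n\cap\mathbb{R}^n=\{0\}$ and $\Psi(T/2)\,i\mathbb{R}^n\cap i\mathbb{R}^n=\{0\}$.
   Context: $I_{\mathbb{R}^{2n}}=\begin{pmatrix}\mathbb{1}_n&0\\0&-\mathbb{1}_n\end{pmatrix}$ on $\mathbb{R}^{2n}=\mathbb{R}^n\oplus i\mathbb{R}^n$ with $\omega_{std}=\sum dx_i\wedge dy_i$; $\mathbb{R}^n=\mathrm{Fix}\,I_{\mathbb{R}^{2n}}$ and $i\mathbb{R}^n=\mathrm{Fix}(-I_{\mathbb{R}^{2n}})$. (Note that the hypotheses imply $\Psi(T)=I_{\mathbb{R}^{2n}}\Psi(T/2)^{-1}I_{\mathbb{R}^{2n}}\Psi(T/2)$.) *)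

theory Defs
  imports "HOL-Analysis.Analysis"
begin

text \<open>R^{2n} = R^n (+) iR^n is modelled as real^('n + 'n): coordinate Inl i is x_i,
  coordinate Inr i is y_i.\<close>

definition omega_std :: "real^('n::finite + 'n) \<Rightarrow> real^('n + 'n) \<Rightarrow> real" where
  "omega_std u v = (\<Sum>i\<in>UNIV. u $ Inl i * v $ Inr i - u $ Inr i * v $ Inl i)"

definition symplectic :: "real^('n::finite + 'n)^('n + 'n) \<Rightarrow> bool" where
  "symplectic A \<longleftrightarrow> (\<forall>u v. omega_std (A *v u) (A *v v) = omega_std u v)"

definition Irefl :: "real^('n::finite + 'n)^('n + 'n)" where
  "Irefl = (\<chi> i j. if i = j then (case i of Inl _ \<Rightarrow> 1 | Inr _ \<Rightarrow> -1) else 0)"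

definition realpart :: "(real^('n::finite + 'n)) set" where
  "realpart = {x. \<forall>i. x $ Inr i = 0}"

definition imagpart :: "(real^('n::finite + 'n)) set" where
  "imagpart = {x. \<forall>i. x $ Inl i = 0}"

definition smooth_curve :: "(real \<Rightarrow> 'a::real_normed_vector) \<Rightarrow> bool" where
  "smooth_curve f \<longleftrightarrow> (\<exists>D :: nat \<Rightarrow> real \<Rightarrow> 'a. D 0 = f \<and>
     (\<forall>k t. (D k has_vector_derivative D (Suc k) t) (at t)))"

end

theory Submission
  imports Defs
begin

text \<open>Writing P = \<Psi>(T/2) and Q = \<Psi>(T), the hypotheses give P = I P I Q with I = Irefl an
  involution. Since P is injective (it is symplectic), Q x = x holds exactly when I P x = P I x.
  Splitting x = a + b with a real and b imaginary, I P x = P I x says precisely that P a is real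
  and P b is imaginary; so Q has a nonzero fixed vector if and only if P maps a nonzero real or a
  nonzero imaginary vector into the same subspace.\<close>

lemma symplectic_mult_eq_0_imp:
  assumes "symplectic A" "A *v u = 0"
  shows "u = 0"
proof -
  \<comment> \<open>J u is the complex structure applied to u, so that omega_std u (J u) = |u|^2.\<close>
  define J where "J = (\<chi> k. case k of Inl i \<Rightarrow> - u $ Inr i | Inr i \<Rightarrow> u $ Inl i)"
  have "omega_std u J = omega_std (A *v u) (A *v J)"
    using assms(1) by (simp add: symplectic_def)
  also have "\<dots> = 0"
    using assms(2) by (simp add: omega_std_def)
  finally have "(\<Sum>i\<in>UNIV. (u $ Inl i)\<^sup>2 + (u $ Inr i)\<^sup>2) = 0"
    by (simp add: omega_std_def J_def power2_eq_square)
  then have "\<forall>i. u $ Inl i = 0 \<and> u $ Inr i = 0"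
    by (simp add: sum_nonneg_eq_0_iff sum_power2_eq_zero_iff)
  then show ?thesis
    by (metis sum.exhaust vec_eq_iff zero_index)
qed

lemma Irefl_Inl [simp]: "(Irefl *v x) $ Inl i = x $ Inl i"
proof -
  have "(Irefl *v x) $ Inl i = (\<Sum>j\<in>UNIV. if Inl i = j then x $ j else 0)"
    unfolding Irefl_def matrix_vector_mult_def vec_lambda_beta by (rule sum.cong) auto
  then show ?thesis by simp
qed

lemma Irefl_Inr [simp]: "(Irefl *v x) $ Inr i = - x $ Inr i"
proof -
  have "(Irefl *v x) $ Inr i = (\<Sum>j\<in>UNIV. if Inr i = j then - x $ j else 0)"
    unfolding Irefl_def matrix_vector_mult_def vec_lambda_beta by (rule sum.cong) auto
  then show ?thesis by simp
qed

lemma Irefl_Irefl [simp]: "Irefl *v (Irefl *v x) = x"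
  by (simp add: vec_eq_iff split_sum_all)

lemma Irefl_realpart: "a \<in> realpart \<Longrightarrow> Irefl *v a = a"
  by (simp add: realpart_def vec_eq_iff split_sum_all)

lemma Irefl_imagpart: "b \<in> imagpart \<Longrightarrow> Irefl *v b = - b"
  by (simp add: imagpart_def vec_eq_iff split_sum_all)

lemma zero_in_realpart: "0 \<in> realpart" and zero_in_imagpart: "0 \<in> imagpart"
  by (simp_all add: realpart_def imagpart_def)

lemma realpart_imagpart_decomp:
  obtains a b where "a \<in> realpart" "b \<in> imagpart" "x = a + b"
proof
  show "(1/2) *\<^sub>R (x + Irefl *v x) \<in> realpart" "(1/2) *\<^sub>R (x - Irefl *v x) \<in> imagpart"
    by (simp_all add: realpart_def imagpart_def)
  show "x = (1/2) *\<^sub>R (x + Irefl *v x) + (1/2) *\<^sub>R (x - Irefl *v x)"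
    by (simp add: vec_eq_iff field_simps)
qed

lemma Irefl_add_eq_diff_iff:
  "Irefl *v (y + z) = y - z \<longleftrightarrow> y \<in> realpart \<and> z \<in> imagpart"
  by (force simp: realpart_def imagpart_def vec_eq_iff split_sum_all)

lemma fixed_point_iff_commutes:
  fixes P Q I :: "real^'m^'m"
  assumes conj: "P = I ** P ** I ** Q"
    and involution: "\<And>v. I *v (I *v v) = v"
    and inj: "\<And>u. P *v u = 0 \<Longrightarrow> u = 0"
  shows "Q *v x = x \<longleftrightarrow> I *v (P *v x) = P *v (I *v x)"
proof -
  have "I *v (P *v x) = I *v (I *v (P *v (I *v (Q *v x))))"
    by (subst conj) (simp add: matrix_vector_mul_assoc matrix_mul_assoc)
  then have IP: "I *v (P *v x) = P *v (I *v (Q *v x))"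
    by (simp only: involution)
  have "Q *v x = x \<longleftrightarrow> I *v (Q *v x - x) = 0"
    by (metis involution matrix_vector_mult_0_right eq_iff_diff_eq_0)
  also have "\<dots> \<longleftrightarrow> P *v (I *v (Q *v x - x)) = 0"
    using inj by auto
  also have "\<dots> \<longleftrightarrow> I *v (P *v x) = P *v (I *v x)"
    by (simp add: IP matrix_vector_mult_diff_distrib)
  finally show ?thesis .
qed

lemma Irefl_commutes_iff:
  fixes P :: "real^('n::finite + 'n)^('n + 'n)"
  assumes "a \<in> realpart" "b \<in> imagpart"
  shows "Irefl *v (P *v (a + b)) = P *v (Irefl *v (a + b))
         \<longleftrightarrow> P *v a \<in> realpart \<and> P *v b \<in> imagpart"
proof -
  have "P *v (Irefl *v (a + b)) = P *v a - P *v b"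
    using assms by (simp add: Irefl_realpart Irefl_imagpart matrix_vector_right_distrib
        matrix_vector_mult_diff_distrib)
  then show ?thesis
    by (metis matrix_vector_right_distrib Irefl_add_eq_diff_iff)
qed

lemma image_inter_self_eq_zero_iff:
  assumes "0 \<in> S" "f 0 = 0"
  shows "f ` S \<inter> S = {0} \<longleftrightarrow> (\<forall>a\<in>S. f a \<in> S \<longrightarrow> f a = 0)"
  using assms by (auto simp: image_iff)

lemma no_Irefl_commuting_vector_iff:
  fixes P :: "real^('n::finite + 'n)^('n + 'n)"
  assumes inj: "\<And>u. P *v u = 0 \<Longrightarrow> u = 0"
  shows "(\<forall>x. Irefl *v (P *v x) = P *v (Irefl *v x) \<longrightarrow> x = 0) \<longleftrightarrow>
         ((\<lambda>x. P *v x) ` realpart \<inter> realpart = {0} \<and> (\<lambda>x. P *v x) ` imagpart \<inter> imagpart = {0})"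
proof -
  have inj_iff: "P *v u = 0 \<longleftrightarrow> u = 0" for u
    using inj by auto
  have "(\<lambda>x. P *v x) ` realpart \<inter> realpart = {0} \<longleftrightarrow> (\<forall>a\<in>realpart. P *v a \<in> realpart \<longrightarrow> a = 0)"
    and "(\<lambda>x. P *v x) ` imagpart \<inter> imagpart = {0} \<longleftrightarrow> (\<forall>b\<in>imagpart. P *v b \<in> imagpart \<longrightarrow> b = 0)"
    by (simp_all add: image_inter_self_eq_zero_iff zero_in_realpart zero_in_imagpart inj_iff)
  moreover have "(\<forall>x. Irefl *v (P *v x) = P *v (Irefl *v x) \<longrightarrow> x = 0) \<longleftrightarrow>
      (\<forall>a\<in>realpart. P *v a \<in> realpart \<longrightarrow> a = 0) \<and> (\<forall>b\<in>imagpart. P *v b \<in> imagpart \<longrightarrow> b = 0)"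
  proof (intro iffI conjI ballI impI allI)
    fix a assume none: "\<forall>x. Irefl *v (P *v x) = P *v (Irefl *v x) \<longrightarrow> x = 0"
      and "a \<in> realpart" "P *v a \<in> realpart"
    then have "Irefl *v (P *v a) = P *v (Irefl *v a)"
      using Irefl_commutes_iff[of a 0 P] zero_in_imagpart by simp
    with none show "a = 0"
      by blast
  next
    fix b assume none: "\<forall>x. Irefl *v (P *v x) = P *v (Irefl *v x) \<longrightarrow> x = 0"
      and "b \<in> imagpart" "P *v b \<in> imagpart"
    then have "Irefl *v (P *v b) = P *v (Irefl *v b)"
      using Irefl_commutes_iff[of 0 b P] zero_in_realpart by simp
    with none show "b = 0"
      by blast
  next
    fix x assume parts: "(\<forall>a\<in>realpart. P *v a \<in> realpart \<longrightarrow> a = 0) \<and>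
        (\<forall>b\<in>imagpart. P *v b \<in> imagpart \<longrightarrow> b = 0)"
      and commutes: "Irefl *v (P *v x) = P *v (Irefl *v x)"
    obtain a b where ab: "a \<in> realpart" "b \<in> imagpart" "x = a + b"
      by (rule realpart_imagpart_decomp)
    with commutes have "P *v a \<in> realpart" "P *v b \<in> imagpart"
      using Irefl_commutes_iff by blast+
    with ab parts show "x = 0"
      by auto
  qed
  ultimately show ?thesis
    by simp
qed

theorem proposition3p4:
  fixes \<Psi> :: "real \<Rightarrow> real^('n::finite + 'n)^('n + 'n)" and T :: real
  assumes "smooth_curve \<Psi>"
    and "\<forall>t. symplectic (\<Psi> t)"
    and "\<Psi> 0 = mat 1"
    and "\<forall>t. \<Psi> (t + T) = \<Psi> t ** \<Psi> T"
    and "\<forall>t. \<Psi> (- t) = Irefl ** \<Psi> t ** Irefl"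
  shows "dim {x. (\<Psi> T - mat 1) *v x = 0} = 0 \<longleftrightarrow>
         ((\<lambda>x. \<Psi> (T/2) *v x) ` realpart \<inter> realpart = {0} \<and>
          (\<lambda>x. \<Psi> (T/2) *v x) ` imagpart \<inter> imagpart = {0})"
proof -
  have "\<Psi> (T/2) = \<Psi> (- (T/2) + T)"
    by simp
  then have conj: "\<Psi> (T/2) = Irefl ** \<Psi> (T/2) ** Irefl ** \<Psi> T"
    using assms(4,5) by metis
  have inj: "\<And>u. \<Psi> (T/2) *v u = 0 \<Longrightarrow> u = 0"
    using assms(2) symplectic_mult_eq_0_imp by blast
  have "dim {x. (\<Psi> T - mat 1) *v x = 0} = 0 \<longleftrightarrow> (\<forall>x. \<Psi> T *v x = x \<longrightarrow> x = 0)"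
    by (auto simp: matrix_vector_mult_diff_rdistrib)
  also have "\<dots> \<longleftrightarrow> (\<forall>x. Irefl *v (\<Psi> (T/2) *v x) = \<Psi> (T/2) *v (Irefl *v x) \<longrightarrow> x = 0)"
    using fixed_point_iff_commutes[OF conj Irefl_Irefl inj] by simp
  finally show ?thesis
    using no_Irefl_commuting_vector_iff[OF inj] by simp
qed

end
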